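(* In the setting described in the context, for every $n\ge1$, every $k\ge0$ and every $x\in\mathbb{R}$, \[ \int_{\mathbb{R}}K_n(x,y)\,y^k\,K_n(y,x)\,d\mu(y)=\sum_{\ell=0}^{n-1}\sum_{\ell'=0}^{n-1}q_\ell(x)\,[J^k]_{\ell,\ell'}\,p_{\ell'}(x), \] i.e. the left-hand side equals $\langle\Pi_n\vec q(x),J^k\Pi_n\vec p(x)\rangle_{\ell^2}$, where $\vec p(x)=(p_0(x),p_1(x),\dots)^t$, $\vec q(x)=(q_0(x),q_1(x),\dots)^t$ and $\Pi_n$ replaces all coordinates with index $\ge n$ by $0$.
   Context: Let $r\ge1$ and let $\mu_1,\dots,\mu_r$ be positive Borel measures on $\mathbb{R}$ with all moments finite, forming a perfect system: for every $\vec n\in\mathbb{N}_0^r$ there is a monic polynomial $P_{\vec n}$ of degree $|\vec n|=n_1+\dots+n_r$ with $\int x^kP_{\vec n}\,d\mu_j=0$ for $0\le k\le n_j-1$, $1\le j\le r$. Type I polynomials $A_{\vec n}=(A_{\vec n,1},\dots,A_{\vec n,r})$: $\deg A_{\vec n,j}\le n_j-1$, $\sum_j\int x^kA_{\vec n,j}\,d\mu_j=0$ for $0\le k\le|\vec n|-2$, and $=1$ for $k=|\vec n|-1$. Let $\mu$ be a positive measure with $\mu_j\ll\mu$, $w_j=d\mu_j/d\mu$, $Q_{\vec n}=\sum_jA_{\vec n,j}w_j$. Fix a path $(\vec n_\ell)_{\ell\ge0}$ with $|\vec n_\ell|=\ell$, $\vec n_{\ell+1}=\vec n_\ell+\vec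 e_{i_\ell}$ ($\vec e_j$ the $j$-th unit vector), and set $p_\ell=P_{\vec n_\ell}$, $q_\ell=Q_{\vec n_{\ell+1}}$, so that $\int p_\ell q_{\ell'}\,d\mu=\delta_{\ell,\ell'}$. The Christoffel--Darboux kernel is $K_n(x,y)=\sum_{j=0}^{n-1}p_j(x)q_j(y)$. The matrix $J=[J_{\ell,k}]_{\ell,k\ge0}$ is defined by $xp_\ell=\sum_{k=0}^{\ell+1}J_{\ell,k}p_k$, $J_{\ell,k}=0$ for $k>\ell+1$ (lower Hessenberg, so its powers are well defined). *)

theory Defs
  imports "HOL-Probability.Probability" "HOL-Computational_Algebra.Polynomial"
begin

text \<open>Multi-indices are functions nat => nat; only the components 1..r matter.\<close>
definition mi_norm :: "nat \<Rightarrow> (nat \<Rightarrow> nat) \<Rightarrow> nat" where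
  "mi_norm r nv = (\<Sum>j=1..r. nv j)"

definition all_moments_finite :: "real measure \<Rightarrow> bool" where
  "all_moments_finite M \<longleftrightarrow> (\<forall>k::nat. integrable M (\<lambda>x. x ^ k))"

definition is_typeII :: "nat \<Rightarrow> (nat \<Rightarrow> real measure) \<Rightarrow> (nat \<Rightarrow> nat) \<Rightarrow> real poly \<Rightarrow> bool" where
  "is_typeII r \<mu>s nv P \<longleftrightarrow>
     lead_coeff P = 1 \<and> degree P = mi_norm r nv \<and>
     (\<forall>j\<in>{1..r}. \<forall>k<nv j. (\<integral>x. x ^ k * poly P x \<partial>(\<mu>s j)) = 0)"

definition perfect_system :: "nat \<Rightarrow> (nat \<Rightarrow> real measure) \<Rightarrow> bool" where
  "perfect_system r \<mu>s \<longleftrightarrow>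
     (\<forall>nv. (\<forall>j. j \<notin> {1..r} \<longrightarrow> nv j = 0) \<longrightarrow> (\<exists>P. is_typeII r \<mu>s nv P))"

text \<open>Type I multiple orthogonal polynomials (A_1,...,A_r) for the index nv (|nv| >= 1).
  deg A_j <= nv_j - 1 is read as A_j = 0 when nv_j = 0.\<close>
definition is_typeI :: "nat \<Rightarrow> (nat \<Rightarrow> real measure) \<Rightarrow> (nat \<Rightarrow> nat) \<Rightarrow> (nat \<Rightarrow> real poly) \<Rightarrow> bool" where
  "is_typeI r \<mu>s nv A \<longleftrightarrow>
     (\<forall>j\<in>{1..r}. (nv j = 0 \<longrightarrow> A j = 0) \<and> degree (A j) \<le> nv j - 1) \<and>
     (\<forall>k. k + 2 \<le> mi_norm r nv \<longrightarrow>
        (\<Sum>j=1..r. (\<integral>x. x ^ k * poly (A j) x \<partial>(\<mu>s j))) = 0) \<and>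
     (\<Sum>j=1..r. (\<integral>x. x ^ (mi_norm r nv - 1) * poly (A j) x \<partial>(\<mu>s j))) = 1"

text \<open>The path: n_0 = 0, n_(l+1) = n_l + e_(i l); component j of n_l counts the steps in direction j.\<close>
definition path_vec :: "(nat \<Rightarrow> nat) \<Rightarrow> nat \<Rightarrow> (nat \<Rightarrow> nat)" where
  "path_vec i l = (\<lambda>j. card {m. m < l \<and> i m = j})"

definition pseq :: "((nat \<Rightarrow> nat) \<Rightarrow> real poly) \<Rightarrow> (nat \<Rightarrow> nat) \<Rightarrow> nat \<Rightarrow> real \<Rightarrow> real" where
  "pseq P i l x = poly (P (path_vec i l)) x"

text \<open>q_l = Q_(n_(l+1)) = sum_j A_(n_(l+1),j) w_j.\<close>
definition qseq :: "nat \<Rightarrow> ((nat \<Rightarrow> nat) \<Rightarrow> nat \<Rightarrow> real poly) \<Rightarrow> (nat \<Rightarrow> real \<Rightarrow> real)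
    \<Rightarrow> (nat \<Rightarrow> nat) \<Rightarrow> nat \<Rightarrow> real \<Rightarrow> real" where
  "qseq r A w i l y = (\<Sum>j=1..r. poly (A (path_vec i (Suc l)) j) y * w j y)"

definition CD_kernel :: "nat \<Rightarrow> ((nat \<Rightarrow> nat) \<Rightarrow> real poly) \<Rightarrow> ((nat \<Rightarrow> nat) \<Rightarrow> nat \<Rightarrow> real poly)
    \<Rightarrow> (nat \<Rightarrow> real \<Rightarrow> real) \<Rightarrow> (nat \<Rightarrow> nat) \<Rightarrow> nat \<Rightarrow> real \<Rightarrow> real \<Rightarrow> real" where
  "CD_kernel r P A w i n x y = (\<Sum>j<n. pseq P i j x * qseq r A w i j y)"

text \<open>Powers of a lower Hessenberg matrix J (J a c = 0 for c > a+1): the product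
  (J * J^k)_(a,b) = sum_c J_(a,c) (J^k)_(c,b) only involves c <= a+1.\<close>
fun hess_pow :: "(nat \<Rightarrow> nat \<Rightarrow> real) \<Rightarrow> nat \<Rightarrow> nat \<Rightarrow> nat \<Rightarrow> real" where
  "hess_pow J 0 a b = (if a = b then 1 else 0)"
| "hess_pow J (Suc k) a b = (\<Sum>c\<le>Suc a. J a c * hess_pow J k c b)"

end

theory Submission
  imports Defs
begin

text \<open>Expanding both kernels turns the integral into a double sum of the moments
  \<open>\<integral> q_l(y) y^k p_l'(y) d\<mu>(y)\<close>. Iterating the recurrence \<open>x p_l = \<Sum>_m J_{l,m} p_m\<close> gives
  \<open>y^k p_l' = \<Sum>_b (J^k)_{l',b} p_b\<close>, and biorthogonality \<open>\<integral> p_b q_l d\<mu> = \<delta>_{b,l}\<close> picks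
  out \<open>(J^k)_{l',l}\<close>. Biorthogonality comes from the two orthogonality conditions: for \<open>b > l\<close>
  the index \<open>n_{l+1}\<close> is componentwise below \<open>n_b\<close>, so the type II conditions kill the
  pairing; for \<open>b \<le> l\<close> the type I conditions read off the coefficient of \<open>x^l\<close> in \<open>p_b\<close>.\<close>

lemma integrable_poly:
  assumes "all_moments_finite M"
  shows "integrable M (poly f)"
proof -
  have "integrable M (\<lambda>x. \<Sum>t\<le>degree f. coeff f t * x ^ t)"
    using assms unfolding all_moments_finite_def
    by (intro Bochner_Integration.integrable_sum integrable_mult_right) auto
  then show ?thesis
    by (simp add: poly_altdef[abs_def])
qed

lemma poly_eq_sum_coeff_power:
  fixes f :: "'a::comm_semiring_1 poly"
  assumes "degree f \<le> N"
  shows "poly f x = (\<Sum>t\<le>N. coeff f t * x ^ t)"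
proof -
  have "poly f x = poly (\<Sum>t\<le>N. monom (coeff f t) t) x"
    by (simp only: poly_as_sum_of_monoms'[OF assms])
  then show ?thesis
    by (simp add: poly_sum poly_monom)
qed

lemma integrable_power_mult_poly:
  assumes "all_moments_finite M"
  shows "integrable M (\<lambda>y. y ^ t * poly f y)"
proof -
  have "(\<lambda>y. y ^ t * poly f y) = poly (monom 1 t * f)"
    by (simp add: fun_eq_iff poly_monom)
  then show ?thesis
    using integrable_poly[OF assms] by simp
qed

lemma integral_poly_mult_poly_expand:
  assumes "all_moments_finite M" and "degree f \<le> N"
  shows "(\<integral>y. poly f y * poly g y \<partial>M) = (\<Sum>t\<le>N. coeff f t * (\<integral>y. y ^ t * poly g y \<partial>M))"
proof -
  have "(\<integral>y. (\<Sum>t\<le>N. coeff f t * (y ^ t * poly g y)) \<partial>M)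
      = (\<Sum>t\<le>N. coeff f t * (\<integral>y. y ^ t * poly g y \<partial>M))"
    using integrable_power_mult_poly[OF assms(1)] by simp
  then show ?thesis
    by (simp add: poly_eq_sum_coeff_power[OF assms(2)] sum_distrib_right mult.assoc)
qed

lemma
  assumes "sets M = sets borel" and "w \<in> borel_measurable borel" and "\<forall>y. 0 \<le> w y"
    and "N = density M (\<lambda>y. ennreal (w y))" and "all_moments_finite N"
  shows integrable_weight_mult_poly: "integrable M (\<lambda>y. w y * poly f y)"
    and integral_weight_mult_poly: "(\<integral>y. w y * poly f y \<partial>M) = (\<integral>y. poly f y \<partial>N)"
proof -
  have w_meas: "w \<in> borel_measurable M"
    using assms(1,2) measurable_cong_sets by blast
  have "poly f \<in> borel_measurable borel"
    by (intro borel_measurable_continuous_onI continuous_intros)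
  then have f_meas: "poly f \<in> borel_measurable M"
    using assms(1) measurable_cong_sets by blast
  show "integrable M (\<lambda>y. w y * poly f y)"
    using integrable_density[OF f_meas w_meas] integrable_poly[OF assms(5)] assms(3,4) by simp
  show "(\<integral>y. w y * poly f y \<partial>M) = (\<integral>y. poly f y \<partial>N)"
    using integral_density[OF f_meas w_meas] assms(3,4) by simp
qed

lemma path_vec_eq_0_outside: "\<forall>l. i l \<in> I \<Longrightarrow> j \<notin> I \<Longrightarrow> path_vec i l j = 0"
  unfolding path_vec_def by auto

lemma path_vec_Suc: "path_vec i (Suc l) j = path_vec i l j + (if i l = j then 1 else 0)"
proof -
  have "{m. m < Suc l \<and> i m = j} = {m. m < l \<and> i m = j} \<union> (if i l = j then {l} else {})"
    by (auto simp: less_Suc_eq)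
  then show ?thesis
    unfolding path_vec_def by (simp add: card_insert_if)
qed

lemma path_vec_mono: "m \<le> l \<Longrightarrow> path_vec i m j \<le> path_vec i l j"
  unfolding path_vec_def by (rule card_mono) auto

lemma mi_norm_path_vec: "\<forall>l. i l \<in> {1..r} \<Longrightarrow> mi_norm r (path_vec i l) = l"
proof (induction l)
  case 0
  then show ?case
    by (simp add: mi_norm_def path_vec_def)
next
  case (Suc l)
  have "(\<Sum>j=1..r. if i l = j then 1 else 0) = (1::nat)"
    using Suc.prems by simp
  then show ?case
    using Suc by (simp add: mi_norm_def path_vec_Suc sum.distrib)
qed

lemma typeI_typeII_orthogonal:
  assumes "is_typeII r \<mu>s nv Pn" and "is_typeI r \<mu>s mv Am"
    and "\<forall>j\<in>{1..r}. mv j \<le> nv j" and "\<forall>j\<in>{1..r}. all_moments_finite (\<mu>s j)"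
  shows "(\<Sum>j=1..r. \<integral>y. poly (Am j) y * poly Pn y \<partial>\<mu>s j) = 0"
proof (rule sum.neutral, rule ballI)
  fix j assume j: "j \<in> {1..r}"
  show "(\<integral>y. poly (Am j) y * poly Pn y \<partial>\<mu>s j) = 0"
  proof (cases "mv j = 0")
    case True
    then show ?thesis
      using assms(2) j unfolding is_typeI_def by simp
  next
    case False
    then have deg: "degree (Am j) \<le> nv j - 1" and "0 < nv j"
      using assms(2,3) j unfolding is_typeI_def by fastforce+
    have "(\<integral>y. poly (Am j) y * poly Pn y \<partial>\<mu>s j)
        = (\<Sum>t\<le>nv j - 1. coeff (Am j) t * (\<integral>y. y ^ t * poly Pn y \<partial>\<mu>s j))"
      using integral_poly_mult_poly_expand[OF _ deg] assms(4) j by simp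
    also have "\<dots> = 0"
      using assms(1) j \<open>0 < nv j\<close> unfolding is_typeII_def by (intro sum.neutral) auto
    finally show ?thesis .
  qed
qed

lemma typeI_pairing_eq_coeff:
  assumes "is_typeI r \<mu>s mv Am" and "degree f < mi_norm r mv"
    and "\<forall>j\<in>{1..r}. all_moments_finite (\<mu>s j)"
  shows "(\<Sum>j=1..r. \<integral>y. poly (Am j) y * poly f y \<partial>\<mu>s j) = coeff f (mi_norm r mv - 1)"
proof -
  define d where "d = mi_norm r mv - 1"
  have deg: "degree f \<le> d"
    using assms(2) unfolding d_def by simp
  have moment: "(\<Sum>j=1..r. \<integral>y. y ^ t * poly (Am j) y \<partial>\<mu>s j) = (if t = d then 1 else 0)"
    if "t \<le> d" for t
    using assms(1,2) that unfolding is_typeI_def d_def by auto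
  have "(\<Sum>j=1..r. \<integral>y. poly (Am j) y * poly f y \<partial>\<mu>s j)
      = (\<Sum>j=1..r. \<integral>y. poly f y * poly (Am j) y \<partial>\<mu>s j)"
    by (simp only: mult.commute)
  also have "\<dots> = (\<Sum>j=1..r. \<Sum>t\<le>d. coeff f t * (\<integral>y. y ^ t * poly (Am j) y \<partial>\<mu>s j))"
    using assms(3) by (intro sum.cong refl integral_poly_mult_poly_expand deg) simp
  also have "\<dots> = (\<Sum>t\<le>d. coeff f t * (\<Sum>j=1..r. \<integral>y. y ^ t * poly (Am j) y \<partial>\<mu>s j))"
    by (subst sum.swap) (simp add: sum_distrib_left)
  also have "\<dots> = (\<Sum>t\<le>d. if t = d then coeff f t else 0)"
    using moment by (intro sum.cong refl) auto
  also have "\<dots> = coeff f d"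
    by simp
  finally show ?thesis
    unfolding d_def .
qed

lemma hess_pow_expansion:
  fixes p :: "nat \<Rightarrow> real"
  assumes recurrence: "\<And>a. y * p a = (\<Sum>c\<le>Suc a. J a c * p c)" and "a + k \<le> N"
  shows "y ^ k * p a = (\<Sum>b\<le>N. hess_pow J k a b * p b)"
  using assms(2)
proof (induction k arbitrary: a)
  case 0
  have "(\<Sum>b\<le>N. hess_pow J 0 a b * p b) = (\<Sum>b\<le>N. if a = b then p b else 0)"
    by (intro sum.cong refl) simp
  then show ?case
    using 0 by simp
next
  case (Suc k)
  have "y ^ Suc k * p a = y ^ k * (y * p a)"
    by simp
  also have "\<dots> = (\<Sum>c\<le>Suc a. J a c * (y ^ k * p c))"
    unfolding recurrence sum_distrib_left by (intro sum.cong refl) (simp add: mult.left_commute)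
  also have "\<dots> = (\<Sum>c\<le>Suc a. J a c * (\<Sum>b\<le>N. hess_pow J k c b * p b))"
    using Suc by (intro sum.cong refl) auto
  also have "\<dots> = (\<Sum>b\<le>N. (\<Sum>c\<le>Suc a. J a c * hess_pow J k c b) * p b)"
    by (simp only: sum_distrib_left sum_distrib_right mult.assoc sum.swap[of _ "{..Suc a}"])
  finally show ?case
    by (simp only: hess_pow.simps)
qed

lemma CD_kernel_product_expand:
  "CD_kernel r P A w i n x y * y ^ k * CD_kernel r P A w i n y x
    = (\<Sum>l<n. \<Sum>l'<n. (pseq P i l x * qseq r A w i l' x) * (qseq r A w i l y * (y ^ k * pseq P i l' y)))"
proof -
  have "CD_kernel r P A w i n x y * y ^ k * CD_kernel r P A w i n y x
      = y ^ k * (CD_kernel r P A w i n x y * CD_kernel r P A w i n y x)"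
    by (simp add: mult_ac)
  also have "\<dots> = (\<Sum>l<n. \<Sum>l'<n. (pseq P i l x * qseq r A w i l' x) * (qseq r A w i l y * (y ^ k * pseq P i l' y)))"
    unfolding CD_kernel_def sum_product by (simp add: sum_distrib_left mult_ac)
  finally show ?thesis .
qed

locale multiple_orthogonal_path =
  fixes r :: nat and \<mu>s :: "nat \<Rightarrow> real measure" and \<mu> :: "real measure"
    and w :: "nat \<Rightarrow> real \<Rightarrow> real"
    and P :: "(nat \<Rightarrow> nat) \<Rightarrow> real poly"
    and A :: "(nat \<Rightarrow> nat) \<Rightarrow> nat \<Rightarrow> real poly"
    and i :: "nat \<Rightarrow> nat" and J :: "nat \<Rightarrow> nat \<Rightarrow> real"
  assumes moments_finite: "\<forall>j\<in>{1..r}. all_moments_finite (\<mu>s j)"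
    and typeII: "\<forall>j. j \<notin> {1..r} \<longrightarrow> nv j = 0 \<Longrightarrow> is_typeII r \<mu>s nv (P nv)"
    and typeI: "\<forall>j. j \<notin> {1..r} \<longrightarrow> nv j = 0 \<Longrightarrow> mi_norm r nv \<ge> 1 \<Longrightarrow> is_typeI r \<mu>s nv (A nv)"
    and sets_\<mu>: "sets \<mu> = sets borel"
    and weight: "j \<in> {1..r} \<Longrightarrow> w j \<in> borel_measurable borel \<and> (\<forall>y. w j y \<ge> 0) \<and>
      \<mu>s j = density \<mu> (\<lambda>y. ennreal (w j y))"
    and path_in_range: "\<forall>l. i l \<in> {1..r}"
    and recurrence: "[:0, 1:] * P (path_vec i l) = (\<Sum>m\<le>Suc l. smult (J l m) (P (path_vec i m)))"
begin

abbreviation p :: "nat \<Rightarrow> real \<Rightarrow> real" where "p \<equiv> pseq P i"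

abbreviation q :: "nat \<Rightarrow> real \<Rightarrow> real" where "q \<equiv> qseq r A w i"

lemma path_vec_admissible: "\<forall>j. j \<notin> {1..r} \<longrightarrow> path_vec i l j = 0"
  using path_vec_eq_0_outside path_in_range by blast

lemma typeII_path: "is_typeII r \<mu>s (path_vec i l) (P (path_vec i l))"
  using typeII path_vec_admissible by blast

lemma typeI_path: "is_typeI r \<mu>s (path_vec i (Suc l)) (A (path_vec i (Suc l)))"
  using typeI path_vec_admissible mi_norm_path_vec path_in_range by simp

lemma
  shows integrable_qseq_mult_poly: "integrable \<mu> (\<lambda>y. q m y * poly f y)"
    and integral_qseq_mult_poly: "(\<integral>y. q m y * poly f y \<partial>\<mu>)
      = (\<Sum>j=1..r. \<integral>y. poly (A (path_vec i (Suc m)) j) y * poly f y \<partial>\<mu>s j)"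
proof -
  let ?A = "A (path_vec i (Suc m))"
  have expand: "q m y * poly f y = (\<Sum>j=1..r. w j y * poly (?A j * f) y)" for y
    unfolding qseq_def sum_distrib_right by (intro sum.cong refl) (simp add: mult_ac)
  have weighted: "integrable \<mu> (\<lambda>y. w j y * poly g y)"
    "(\<integral>y. w j y * poly g y \<partial>\<mu>) = (\<integral>y. poly g y \<partial>\<mu>s j)" if "j \<in> {1..r}" for j g
    using integrable_weight_mult_poly[OF sets_\<mu>] integral_weight_mult_poly[OF sets_\<mu>]
      weight[OF that] moments_finite that by blast+
  show "integrable \<mu> (\<lambda>y. q m y * poly f y)"
    unfolding expand by (intro Bochner_Integration.integrable_sum weighted(1))
  have "(\<integral>y. q m y * poly f y \<partial>\<mu>) = (\<Sum>j=1..r. \<integral>y. w j y * poly (?A j * f) y \<partial>\<mu>)"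
    unfolding expand by (intro Bochner_Integration.integral_sum weighted(1))
  also have "\<dots> = (\<Sum>j=1..r. \<integral>y. poly (?A j * f) y \<partial>\<mu>s j)"
    by (intro sum.cong refl weighted(2))
  finally show "(\<integral>y. q m y * poly f y \<partial>\<mu>) = (\<Sum>j=1..r. \<integral>y. poly (?A j) y * poly f y \<partial>\<mu>s j)"
    by simp
qed

lemma integral_qseq_pseq: "(\<integral>y. q m y * p l y \<partial>\<mu>) = (if l = m then 1 else 0)"
proof (cases "m < l")
  case True
  then have "\<forall>j\<in>{1..r}. path_vec i (Suc m) j \<le> path_vec i l j"
    using path_vec_mono by simp
  then show ?thesis
    using True typeI_typeII_orthogonal[OF typeII_path typeI_path] moments_finite
    by (simp add: integral_qseq_mult_poly pseq_def)
next
  case False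
  have deg_eq: "degree (P (path_vec i l)) = l" and lead: "lead_coeff (P (path_vec i l)) = 1"
    using typeII_path[of l] mi_norm_path_vec[OF path_in_range] unfolding is_typeII_def by auto
  then have deg: "degree (P (path_vec i l)) < mi_norm r (path_vec i (Suc m))"
    using False mi_norm_path_vec[OF path_in_range] by simp
  have "(\<integral>y. q m y * p l y \<partial>\<mu>) = coeff (P (path_vec i l)) m"
    using typeI_pairing_eq_coeff[OF typeI_path deg] moments_finite mi_norm_path_vec[OF path_in_range]
    by (simp add: integral_qseq_mult_poly pseq_def)
  also have "\<dots> = (if l = m then 1 else 0)"
    using lead deg_eq False by (auto simp: coeff_eq_0)
  finally show ?thesis .
qed

lemma pseq_recurrence: "y * p l y = (\<Sum>m\<le>Suc l. J l m * p m y)"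
  using arg_cong[OF recurrence[of l], of "\<lambda>f. poly f y"] by (simp add: pseq_def poly_sum)

lemma
  shows integrable_qseq_power_pseq: "integrable \<mu> (\<lambda>y. q m y * (y ^ k * p l y))"
    and integral_qseq_power_pseq: "(\<integral>y. q m y * (y ^ k * p l y) \<partial>\<mu>) = hess_pow J k l m"
proof -
  show "integrable \<mu> (\<lambda>y. q m y * (y ^ k * p l y))"
    using integrable_qseq_mult_poly[of m "monom 1 k * P (path_vec i l)"] by (simp add: pseq_def poly_monom)
  define N where "N = l + k + m"
  have "q m y * (y ^ k * p l y) = (\<Sum>b\<le>N. hess_pow J k l b * (q m y * p b y))" for y
    using hess_pow_expansion[of y "\<lambda>b. p b y" J l k N] pseq_recurrence
    unfolding N_def by (simp add: sum_distrib_left mult_ac)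
  then have "(\<integral>y. q m y * (y ^ k * p l y) \<partial>\<mu>) = (\<Sum>b\<le>N. hess_pow J k l b * (\<integral>y. q m y * p b y \<partial>\<mu>))"
    using integrable_qseq_mult_poly[of m "P (path_vec i b)" for b] by (simp add: pseq_def)
  also have "\<dots> = (\<Sum>b\<le>N. if b = m then hess_pow J k l b else 0)"
    unfolding integral_qseq_pseq by (intro sum.cong refl) simp
  also have "\<dots> = hess_pow J k l m"
    unfolding N_def by simp
  finally show "(\<integral>y. q m y * (y ^ k * p l y) \<partial>\<mu>) = hess_pow J k l m" .
qed

lemma integral_CD_kernel_power:
  "(\<integral>y. CD_kernel r P A w i n x y * y ^ k * CD_kernel r P A w i n y x \<partial>\<mu>)
    = (\<Sum>l<n. \<Sum>l'<n. q l x * hess_pow J k l l' * p l' x)"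
proof -
  have "(\<integral>y. CD_kernel r P A w i n x y * y ^ k * CD_kernel r P A w i n y x \<partial>\<mu>)
      = (\<Sum>l<n. \<Sum>l'<n. (p l x * q l' x) * (\<integral>y. q l y * (y ^ k * p l' y) \<partial>\<mu>))"
    unfolding CD_kernel_product_expand by (simp add: integrable_qseq_power_pseq)
  also have "\<dots> = (\<Sum>l<n. \<Sum>l'<n. q l x * hess_pow J k l l' * p l' x)"
    unfolding integral_qseq_power_pseq by (subst sum.swap) (simp add: mult_ac)
  finally show ?thesis .
qed

end

theorem lemma1:
  fixes r :: nat and \<mu>s :: "nat \<Rightarrow> real measure" and \<mu> :: "real measure"
    and w :: "nat \<Rightarrow> real \<Rightarrow> real"
    and P :: "(nat \<Rightarrow> nat) \<Rightarrow> real poly"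
    and A :: "(nat \<Rightarrow> nat) \<Rightarrow> nat \<Rightarrow> real poly"
    and i :: "nat \<Rightarrow> nat" and J :: "nat \<Rightarrow> nat \<Rightarrow> real"
    and n k :: nat and x :: real
  assumes "r \<ge> 1"
    and "\<forall>j\<in>{1..r}. sets (\<mu>s j) = sets borel"
    and "\<forall>j\<in>{1..r}. all_moments_finite (\<mu>s j)"
    and "perfect_system r \<mu>s"
    and "\<forall>nv. (\<forall>j. j \<notin> {1..r} \<longrightarrow> nv j = 0) \<longrightarrow> is_typeII r \<mu>s nv (P nv)"
    and "\<forall>nv. (\<forall>j. j \<notin> {1..r} \<longrightarrow> nv j = 0) \<and> mi_norm r nv \<ge> 1 \<longrightarrow> is_typeI r \<mu>s nv (A nv)"
    and "sets \<mu> = sets borel"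
    and "\<forall>j\<in>{1..r}. absolutely_continuous \<mu> (\<mu>s j)"
    and "\<forall>j\<in>{1..r}. w j \<in> borel_measurable borel \<and> (\<forall>y. w j y \<ge> 0) \<and>
           \<mu>s j = density \<mu> (\<lambda>y. ennreal (w j y))"
    and "\<forall>l. i l \<in> {1..r}"
    and "\<forall>l. [:0, 1:] * P (path_vec i l) = (\<Sum>m\<le>Suc l. smult (J l m) (P (path_vec i m)))"
    and "\<forall>l m. m > Suc l \<longrightarrow> J l m = 0"
    and "n \<ge> 1"
  shows "(\<integral>y. CD_kernel r P A w i n x y * y ^ k * CD_kernel r P A w i n y x \<partial>\<mu>)
         = (\<Sum>l<n. \<Sum>l'<n. qseq r A w i l x * hess_pow J k l l' * pseq P i l' x)"
proof -
  interpret multiple_orthogonal_path r \<mu>s \<mu> w P A i J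
    using assms(3,5-7,9-11) by unfold_locales auto
  show ?thesis
    by (rule integral_CD_kernel_power)
qed

end
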